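(* Suppose Assumption 1 holds and every $d^k$ satisfies the $\eta$-inexactness condition for a fixed $\eta\in[0,1)$ ($f$ need not be convex). For $t\ge0$ let $G_t\coloneqq\arg\min_dQ^{x^t}_I(d)$ (the minimizer with $H=I$). For Algorithm 1, if $\sigma I\preceq H_k\preceq MI$ for all $k$ with $M\ge\sigma>0$, then for all $k\ge0$ $$\min_{0\le t\le k}\|G_t\|^2\le\frac{F(x^0)-F^*}{\gamma(k+1)}\cdot\frac{M^2\left(1+\frac1\sigma+\sqrt{1-\frac2M+\frac1{\sigma^2}}\right)^2}{2(1-\eta)\sigma\min_{0\le t\le k}\alpha_t}$$ $$\le\frac{F(x^0)-F^*}{\gamma(k+1)}\cdot\frac{M^2\left(1+\frac1\sigma+\sqrt{1-\frac2M+\frac1{\sigma^2}}\right)^2}{2\sigma}\max\left\{\frac1{1-\eta},\ \frac{L}{2(1-\sqrt\eta)(1-\gamma)\sigma\beta}\right\}.$$ For Algorithm 2, if the initial matrices satisfy $m_0I\preceq H^0_k\preceq M_0I$ with $M_0\ge m_0>0$ for all $k$, then for Variant 1 $$\min_{0\le t\le k}\|G_t\|^2\le\frac{F(x^0)-F^*}{\gamma(k+1)}\cdot\frac{\tilde M_1(\eta)^2\left(1+\frac1{m_0}+\sqrt{1-\frac2{\tilde M_1(\eta)}+\frac1{m_0^2}}\right)^2}{2(1-\eta)m_0},$$ and for Variant 2 the same bound holds with $\tilde M_1(\eta)$ replaced by $\tilde M_2(\eta)$.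
   Context: Problem setting: $F(x)=f(x)+\psi(x)$ on $\mathbb{R}^n$, $F^*=\inf F$. Assumption 1: $f$ is differentiable with $L$-Lipschitz continuous gradient ($L>0$); $\psi:\mathbb{R}^n\to\mathbb{R}\cup\{+\infty\}$ is convex, proper and closed; $F$ is bounded below; the solution set $\Omega=\{x:F(x)=F^*\}$ is nonempty. For $x\in\mathbb{R}^n$ and symmetric $H$, $Q^x_H(d)\coloneqq\nabla f(x)^Td+\frac12d^THd+\psi(x+d)-\psi(x)$, $Q^*=\inf_dQ^x_H(d)$; $d$ satisfies the $\eta$-inexactness condition if $Q^x_H(d)\le(1-\eta)Q^*$. Algorithm 1: given $\beta,\gamma\in(0,1)$, $x^0$, fixed $\eta\in[0,1)$; for $k=0,1,\dots$: choose symmetric $H_k$ with $Q_k\coloneqq Q^{x^k}_{H_k}$ strongly convex; compute $d^k$ satisfying the $\eta$-inexactness condition for $Q_k$; let $\Delta_k=\nabla f(x^k)^Td^k+\psi(x^k+d^k)-\psi(x^k)$; let $\alpha_k=\beta^i$ for the smallest nonnegative integer $i$ with $F(x^k+\alpha_kd^k)\le F(x^k)+\alpha_k\gamma\Delta_k$; set $x^{k+1}=x^k+\alpha_kd^k$. Algorithm 2: given $\beta\in(0,1)$, $\gamma\in(0,1]$, $x^0$, fixed $\eta\in[0,1)$; for each $k$: choose symmetric $H^0_k$ (in Variant 1, $H^0_k\succ0$); set $\alpha_k\leftarrow1$, $H_k\leftarrow H^0_k$, compute $d^k$ satisfying the $\eta$-inexactness condition for $Q^{x^k}_{H_k}$;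 while $F(x^k)-F(x^k+d^k)\ge-\gamma Q^{x^k}_{H_k}(d^k)\ge0$ fails: Variant 1 sets $\alpha_k\leftarrow\beta\alpha_k$, $H_k\leftarrow H^0_k/\alpha_k$; Variant 2 sets $H_k\leftarrow H^0_k+\alpha_k^{-1}I$, then $\alpha_k\leftarrow\beta\alpha_k$; then $d^k$ is recomputed satisfying the $\eta$-inexactness condition. Finally $x^{k+1}=x^k+d^k$; "final $H_k$" is the accepted matrix. Constants: $\tilde M_2(\eta)\coloneqq M_0+\max\{1,\frac1\beta(\frac{L(1+\sqrt\eta)}{2-\gamma(1-\sqrt\eta)}-m_0)\}$, $\tilde M_1(\eta)\coloneqq M_0\max\{1,\frac{L(1+\sqrt\eta)}{\beta(2-\gamma(1-\sqrt\eta))m_0}\}$. *)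

theory Defs
  imports "HOL-Analysis.Analysis"
begin

definition ext_convex :: "('a::real_vector \<Rightarrow> ereal) \<Rightarrow> bool" where
  "ext_convex g \<longleftrightarrow> (\<forall>x y t. 0 \<le> t \<and> t \<le> 1 \<longrightarrow>
      g ((1 - t) *\<^sub>R x + t *\<^sub>R y) \<le> ereal (1 - t) * g x + ereal t * g y)"

definition ext_proper :: "('a \<Rightarrow> ereal) \<Rightarrow> bool" where
  "ext_proper g \<longleftrightarrow> (\<forall>x. g x \<noteq> -\<infinity>) \<and> (\<exists>x. g x \<noteq> \<infinity>)"

definition ext_closed :: "('a::topological_space \<Rightarrow> ereal) \<Rightarrow> bool" where
  "ext_closed g \<longleftrightarrow> closed {(x, a::real). g x \<le> ereal a}"

definition Fobj :: "('a \<Rightarrow> real) \<Rightarrow> ('a \<Rightarrow> ereal) \<Rightarrow> 'a \<Rightarrow> ereal" where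
  "Fobj f psi x = ereal (f x) + psi x"

definition Fstar :: "('a \<Rightarrow> real) \<Rightarrow> ('a \<Rightarrow> ereal) \<Rightarrow> ereal" where
  "Fstar f psi = (INF x. Fobj f psi x)"

definition assumption1 :: "(real^'n \<Rightarrow> real) \<Rightarrow> (real^'n \<Rightarrow> real^'n) \<Rightarrow> real
    \<Rightarrow> (real^'n \<Rightarrow> ereal) \<Rightarrow> bool" where
  "assumption1 f gradf L psi \<longleftrightarrow>
     (\<forall>x. (f has_derivative (\<lambda>d. gradf x \<bullet> d)) (at x)) \<and>
     L > 0 \<and> (\<forall>x y. norm (gradf x - gradf y) \<le> L * norm (x - y)) \<and>
     ext_convex psi \<and> ext_proper psi \<and> ext_closed psi \<and>
     (\<exists>c. \<forall>x. ereal c \<le> Fobj f psi x) \<and>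
     (\<exists>x. Fobj f psi x = Fstar f psi)"

definition Qm :: "(real^'n \<Rightarrow> real^'n) \<Rightarrow> (real^'n \<Rightarrow> ereal) \<Rightarrow> real^'n \<Rightarrow> real^'n^'n
    \<Rightarrow> real^'n \<Rightarrow> ereal" where
  "Qm gradf psi x H d = ereal (gradf x \<bullet> d + 1/2 * (d \<bullet> (H *v d))) + psi (x + d) - psi x"

definition Qstar :: "(real^'n \<Rightarrow> real^'n) \<Rightarrow> (real^'n \<Rightarrow> ereal) \<Rightarrow> real^'n \<Rightarrow> real^'n^'n \<Rightarrow> ereal" where
  "Qstar gradf psi x H = (INF d. Qm gradf psi x H d)"

definition inexact :: "real \<Rightarrow> (real^'n \<Rightarrow> real^'n) \<Rightarrow> (real^'n \<Rightarrow> ereal) \<Rightarrow> real^'n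
    \<Rightarrow> real^'n^'n \<Rightarrow> real^'n \<Rightarrow> bool" where
  "inexact \<eta> gradf psi x H d \<longleftrightarrow> Qm gradf psi x H d \<le> ereal (1 - \<eta>) * Qstar gradf psi x H"

definition Gmap :: "(real^'n \<Rightarrow> real^'n) \<Rightarrow> (real^'n \<Rightarrow> ereal) \<Rightarrow> real^'n \<Rightarrow> real^'n" where
  "Gmap gradf psi x = (THE d. \<forall>e. Qm gradf psi x (mat 1) d \<le> Qm gradf psi x (mat 1) e)"

definition loewner_between :: "real \<Rightarrow> real^'n^'n \<Rightarrow> real \<Rightarrow> bool" where
  "loewner_between a H b \<longleftrightarrow> (\<forall>v. a * (v \<bullet> v) \<le> v \<bullet> (H *v v) \<and> v \<bullet> (H *v v) \<le> b * (v \<bullet> v))"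

definition symmetric_mat :: "real^'n^'n \<Rightarrow> bool" where
  "symmetric_mat H \<longleftrightarrow> transpose H = H"

definition Delta :: "(real^'n \<Rightarrow> real^'n) \<Rightarrow> (real^'n \<Rightarrow> ereal) \<Rightarrow> real^'n \<Rightarrow> real^'n \<Rightarrow> ereal" where
  "Delta gradf psi x d = ereal (gradf x \<bullet> d) + psi (x + d) - psi x"

definition armijo :: "(real^'n \<Rightarrow> real) \<Rightarrow> (real^'n \<Rightarrow> real^'n) \<Rightarrow> (real^'n \<Rightarrow> ereal) \<Rightarrow> real
    \<Rightarrow> real^'n \<Rightarrow> real^'n \<Rightarrow> real \<Rightarrow> bool" where
  "armijo f gradf psi \<gamma> x d a \<longleftrightarrow>
     Fobj f psi (x + a *\<^sub>R d) \<le> Fobj f psi x + ereal (a * \<gamma>) * Delta gradf psi x d"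

text \<open>A run (x, H, d, alpha) of Algorithm 1.  Strong convexity of Q_k is implied by the
 bound sigma I \<preceq> H_k with sigma > 0 assumed in the corollary.\<close>
definition alg1_run :: "(real^'n \<Rightarrow> real) \<Rightarrow> (real^'n \<Rightarrow> real^'n) \<Rightarrow> (real^'n \<Rightarrow> ereal)
    \<Rightarrow> real \<Rightarrow> real \<Rightarrow> real \<Rightarrow> (nat \<Rightarrow> real^'n) \<Rightarrow> (nat \<Rightarrow> real^'n^'n)
    \<Rightarrow> (nat \<Rightarrow> real^'n) \<Rightarrow> (nat \<Rightarrow> real) \<Rightarrow> bool" where
  "alg1_run f gradf psi \<beta> \<gamma> \<eta> x H d \<alpha> \<longleftrightarrow>
     0 < \<beta> \<and> \<beta> < 1 \<and> 0 < \<gamma> \<and> \<gamma> < 1 \<and> 0 \<le> \<eta> \<and> \<eta> < 1 \<and>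
     (\<forall>k. symmetric_mat (H k) \<and>
          inexact \<eta> gradf psi (x k) (H k) (d k) \<and>
          (\<exists>i::nat. \<alpha> k = \<beta> ^ i \<and> armijo f gradf psi \<gamma> (x k) (d k) (\<beta> ^ i) \<and>
                 (\<forall>j<i. \<not> armijo f gradf psi \<gamma> (x k) (d k) (\<beta> ^ j))) \<and>
          x (Suc k) = x k + \<alpha> k *\<^sub>R d k)"

text \<open>Trial matrices in the inner loop of Algorithm 2 (j = number of failed tests so far).
 Variant 1: H = H0 / alpha with alpha = beta^j.
 Variant 2: H = H0 + alpha^{-1} I with alpha = beta^(j-1) (before the update of alpha).\<close>
definition trialH :: "nat \<Rightarrow> real \<Rightarrow> real^'n^'n \<Rightarrow> nat \<Rightarrow> real^'n^'n" where
  "trialH variant \<beta> H0 j =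
     (if variant = 1 then (1 / \<beta> ^ j) *\<^sub>R H0
      else if j = 0 then H0 else H0 + (1 / \<beta> ^ (j - 1)) *\<^sub>R mat 1)"

definition accept2 :: "(real^'n \<Rightarrow> real) \<Rightarrow> (real^'n \<Rightarrow> real^'n) \<Rightarrow> (real^'n \<Rightarrow> ereal) \<Rightarrow> real
    \<Rightarrow> real^'n \<Rightarrow> real^'n^'n \<Rightarrow> real^'n \<Rightarrow> bool" where
  "accept2 f gradf psi \<gamma> x H d \<longleftrightarrow>
     Fobj f psi x - Fobj f psi (x + d) \<ge> - (ereal \<gamma> * Qm gradf psi x H d) \<and>
     - (ereal \<gamma> * Qm gradf psi x H d) \<ge> 0"

text \<open>A run of Algorithm 2 (variant 1 or 2): nb k is the number of failed acceptance tests
 in iteration k, D k j the direction computed for the j-th trial matrix.\<close>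
definition alg2_run :: "nat \<Rightarrow> (real^'n \<Rightarrow> real) \<Rightarrow> (real^'n \<Rightarrow> real^'n) \<Rightarrow> (real^'n \<Rightarrow> ereal)
    \<Rightarrow> real \<Rightarrow> real \<Rightarrow> real \<Rightarrow> (nat \<Rightarrow> real^'n) \<Rightarrow> (nat \<Rightarrow> real^'n^'n)
    \<Rightarrow> (nat \<Rightarrow> nat) \<Rightarrow> (nat \<Rightarrow> nat \<Rightarrow> real^'n) \<Rightarrow> bool" where
  "alg2_run variant f gradf psi \<beta> \<gamma> \<eta> x H0 nb D \<longleftrightarrow>
     0 < \<beta> \<and> \<beta> < 1 \<and> 0 < \<gamma> \<and> \<gamma> \<le> 1 \<and> 0 \<le> \<eta> \<and> \<eta> < 1 \<and>
     (\<forall>k. symmetric_mat (H0 k) \<and>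
          (\<forall>j \<le> nb k. inexact \<eta> gradf psi (x k) (trialH variant \<beta> (H0 k) j) (D k j)) \<and>
          (\<forall>j < nb k. \<not> accept2 f gradf psi \<gamma> (x k) (trialH variant \<beta> (H0 k) j) (D k j)) \<and>
          accept2 f gradf psi \<gamma> (x k) (trialH variant \<beta> (H0 k) (nb k)) (D k (nb k)) \<and>
          x (Suc k) = x k + D k (nb k))"

definition tildeM1 :: "real \<Rightarrow> real \<Rightarrow> real \<Rightarrow> real \<Rightarrow> real \<Rightarrow> real \<Rightarrow> real" where
  "tildeM1 L \<beta> \<gamma> m0 M0 \<eta> =
     M0 * max 1 (L * (1 + sqrt \<eta>) / (\<beta> * (2 - \<gamma> * (1 - sqrt \<eta>)) * m0))"

definition tildeM2 :: "real \<Rightarrow> real \<Rightarrow> real \<Rightarrow> real \<Rightarrow> real \<Rightarrow> real \<Rightarrow> real" where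
  "tildeM2 L \<beta> \<gamma> m0 M0 \<eta> =
     M0 + max 1 ((1 / \<beta>) * (L * (1 + sqrt \<eta>) / (2 - \<gamma> * (1 - sqrt \<eta>)) - m0))"

definition cconst :: "real \<Rightarrow> real \<Rightarrow> real" where
  "cconst s M = M\<^sup>2 * (1 + 1 / s + sqrt (1 - 2 / M + 1 / s\<^sup>2))\<^sup>2"

definition minGsq :: "(real^'n \<Rightarrow> real^'n) \<Rightarrow> (real^'n \<Rightarrow> ereal) \<Rightarrow> (nat \<Rightarrow> real^'n) \<Rightarrow> nat \<Rightarrow> real" where
  "minGsq gradf psi x k = Min ((\<lambda>t. (norm (Gmap gradf psi (x t)))\<^sup>2) ` {..k})"

end

theory Submission
  imports Defs
begin

text \<open>If d is an inexact minimiser of the model with H \<preceq> M I, then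
  Q(d) \<le> (1 - \<eta>) Q* \<le> -(1 - \<eta>) |G|^2 / (2 max M 1): testing Q at a multiple of the minimiser G of
  the unit-metric model and using its optimality bounds Q* by |G|^2.  The Armijo rule of
  Algorithm 1 and the acceptance test of Algorithm 2 turn this into a decrease of F by a multiple
  of |G|^2, and telescoping bounds the smallest |G|^2.  Step sizes (resp. accepted matrices) are
  controlled because, by the descent lemma and -\<Delta> \<ge> d'Hd/(1 + \<surd>\<eta>), a trial fails only if its
  step is long (resp. its curvature is small).  The constant 2 max M 1 so obtained is at most
  cconst \<sigma> M / (2 \<sigma>).\<close>

lemma quadratic_form_scaleR: "w \<bullet> ((c *\<^sub>R A) *v w) = c * (w \<bullet> (A *v w))"
  for A :: "real^'n^'n"
  by (simp add: scaleR_matrix_vector_assoc[symmetric])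

lemma quadratic_form_add_scaled_identity:
  "w \<bullet> ((A + c *\<^sub>R mat 1) *v w) = w \<bullet> (A *v w) + c * (w \<bullet> w)"
  for A :: "real^'n^'n"
  by (simp add: matrix_vector_mult_add_rdistrib scaleR_matrix_vector_assoc[symmetric] inner_add_right)

lemma attains_Inf_if_compact_sublevels:
  fixes h :: "'a::heine_borel \<Rightarrow> ereal"
  assumes compact: "\<And>r. compact {e. h e \<le> ereal r}" and Inf: "(INF e. h e) = ereal m"
  obtains l where "\<And>e. h l \<le> h e"
proof -
  define F where "F n = {e. h e \<le> ereal (m + 1 / (real n + 1))}" for n :: nat
  have "\<Inter>(range F) \<noteq> {}"
  proof (rule compact_nest)
    show "compact (F n)" for n unfolding F_def by (rule compact)
    show "F n \<noteq> {}" for n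
    proof -
      have "(INF e. h e) < ereal (m + 1 / (real n + 1))" using Inf by simp
      then show ?thesis unfolding F_def by (auto simp: Inf_less_iff dest: less_imp_le)
    qed
    show "F n \<subseteq> F k" if "k \<le> n" for k n
      using that unfolding F_def by (auto simp: frac_le intro: order_trans)
  qed
  then obtain l where l: "\<And>n. h l \<le> ereal (m + 1 / (real n + 1))" unfolding F_def by blast
  have "h l \<le> ereal m"
  proof (cases "h l")
    case (real z)
    have "z \<le> m"
    proof (rule field_le_epsilon)
      fix \<epsilon> :: real assume "0 < \<epsilon>"
      then obtain n where n: "inverse (real (Suc n)) < \<epsilon>" using reals_Archimedean by blast
      have "z \<le> m + 1 / (real n + 1)" using l[of n] real by simp
      with n show "z \<le> m + \<epsilon>" by (simp add: inverse_eq_divide add.commute)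
    qed
    then show ?thesis using real by simp
  qed (use l[of 0] in auto)
  then have "\<And>e. h l \<le> h e" using Inf by (metis INF_lower UNIV_I order_trans)
  then show ?thesis using that by blast
qed

lemma telescoping_Min_bound:
  fixes F a n :: "nat \<Rightarrow> real"
  assumes decrease: "\<And>t. F (Suc t) \<le> F t - a t * c * n t" and lower: "\<And>t. Finf \<le> F t"
    and c: "0 < c" and a: "\<And>t. 0 < a t" and n: "\<And>t. 0 \<le> n t"
  shows "Min (n ` {..k}) * (real k + 1) * Min (a ` {..k}) * c \<le> F 0 - Finf"
proof -
  have telescope: "(\<Sum>t\<le>j. a t * c * n t) \<le> F 0 - F (Suc j)" for j
  proof (induction j)
    case (Suc j) then show ?case using decrease[of "Suc j"] by simp
  qed (use decrease[of 0] in simp)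
  have "Min (a ` {..k}) \<in> a ` {..k}" "Min (n ` {..k}) \<in> n ` {..k}" by (simp_all add: Min_in)
  then have Min_nonneg: "0 \<le> Min (a ` {..k})" "0 \<le> Min (n ` {..k})" using a n by (auto intro: less_imp_le)
  have "(\<Sum>t\<le>k. Min (a ` {..k}) * c * Min (n ` {..k})) \<le> (\<Sum>t\<le>k. a t * c * n t)"
    using Min_nonneg c by (intro sum_mono mult_mono) auto
  also have "\<dots> \<le> F 0 - Finf" using telescope[of k] lower[of "Suc k"] by simp
  finally show ?thesis by (simp add: algebra_simps)
qed

section \<open>Consequences of Assumption 1 and the quadratic model\<close>

lemma assumption1_psi_not_MInf: "assumption1 f gradf L psi \<Longrightarrow> psi y \<noteq> -\<infinity>"
  by (simp add: assumption1_def ext_proper_def)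

lemma assumption1_L_pos: "assumption1 f gradf L psi \<Longrightarrow> 0 < L"
  by (simp add: assumption1_def)

lemma assumption1_psi_finite:
  assumes "assumption1 f gradf L psi" and "psi y \<noteq> \<infinity>"
  obtains p where "psi y = ereal p"
  using assms assumption1_psi_not_MInf[OF assms(1), of y] by (cases "psi y") auto

lemma assumption1_psi_segment_real:
  assumes A1: "assumption1 f gradf L psi" and s: "0 \<le> s" "s \<le> 1"
    and px: "psi x = ereal px" and pd: "psi (x + d) = ereal pd"
  obtains p where "psi (x + s *\<^sub>R d) = ereal p" "p \<le> (1 - s) * px + s * pd"
proof -
  have "(1 - s) *\<^sub>R x + s *\<^sub>R (x + d) = x + s *\<^sub>R d" by (simp add: algebra_simps)
  then have "psi (x + s *\<^sub>R d) \<le> ereal ((1 - s) * px + s * pd)"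
    using A1 s px pd unfolding assumption1_def ext_convex_def by (metis times_ereal.simps(1) plus_ereal.simps(1))
  moreover have "psi (x + s *\<^sub>R d) \<noteq> -\<infinity>" using assumption1_psi_not_MInf[OF A1] .
  ultimately show ?thesis using that by (cases "psi (x + s *\<^sub>R d)") auto
qed

lemma assumption1_descent_lemma:
  assumes A1: "assumption1 f gradf L psi"
  shows "f (x + d) \<le> f x + gradf x \<bullet> d + L / 2 * (norm d)\<^sup>2"
proof -
  have fd: "\<And>y. (f has_derivative (\<lambda>v. gradf y \<bullet> v)) (at y)"
    and lip: "\<And>y z. norm (gradf y - gradf z) \<le> L * norm (y - z)"
    using A1 by (auto simp: assumption1_def)
  define \<phi> where "\<phi> t = f (x + t *\<^sub>R d) - t * (gradf x \<bullet> d) - L * t\<^sup>2 * (norm d)\<^sup>2 / 2" for t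
  have der: "DERIV \<phi> t :> (gradf (x + t *\<^sub>R d) - gradf x) \<bullet> d - L * t * (norm d)\<^sup>2" for t
  proof -
    have "((\<lambda>t. x + t *\<^sub>R d) has_derivative (\<lambda>h. h *\<^sub>R d)) (at t)"
      by (auto intro!: derivative_eq_intros)
    from has_derivative_compose[OF this fd]
    have "((\<lambda>t. f (x + t *\<^sub>R d)) has_real_derivative (gradf (x + t *\<^sub>R d) \<bullet> d)) (at t)"
      by (simp add: has_field_derivative_def mult.commute[of _ "gradf (x + t *\<^sub>R d) \<bullet> d"])
    then show ?thesis unfolding \<phi>_def
      by (auto intro!: derivative_eq_intros simp: algebra_simps inner_diff_left)
  qed
  have "\<phi> 1 \<le> \<phi> 0"
  proof (rule DERIV_nonpos_imp_nonincreasing[of 0 1 \<phi>])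
    fix t :: real assume t: "0 \<le> t" "t \<le> 1"
    have "(gradf (x + t *\<^sub>R d) - gradf x) \<bullet> d \<le> norm (gradf (x + t *\<^sub>R d) - gradf x) * norm d"
      by (rule norm_cauchy_schwarz)
    also have "\<dots> \<le> L * norm (t *\<^sub>R d) * norm d"
      using lip[of "x + t *\<^sub>R d" x] by (simp add: mult_right_mono)
    also have "\<dots> = L * t * (norm d)\<^sup>2" using t by (simp add: power2_eq_square)
    finally show "\<exists>y. DERIV \<phi> t :> y \<and> y \<le> 0" using der[of t] by auto
  qed simp
  then show ?thesis unfolding \<phi>_def by simp
qed

lemma Fstar_eq_real:
  assumes A1: "assumption1 f gradf L psi" and px0: "psi x0 \<noteq> \<infinity>"
  obtains fs where "Fstar f psi = ereal fs" "\<And>y. ereal fs \<le> Fobj f psi y"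
proof -
  obtain c where c: "\<And>y. ereal c \<le> Fobj f psi y" using A1 by (auto simp: assumption1_def)
  have "ereal c \<le> Fstar f psi" unfolding Fstar_def by (rule INF_greatest) (rule c)
  moreover have "Fstar f psi \<le> Fobj f psi x0" unfolding Fstar_def by (rule INF_lower) simp
  moreover have "Fobj f psi x0 \<noteq> \<infinity>" using px0 by (simp add: Fobj_def)
  ultimately obtain fs where fs: "Fstar f psi = ereal fs" by (cases "Fstar f psi") auto
  moreover have "\<And>y. Fstar f psi \<le> Fobj f psi y" unfolding Fstar_def by (rule INF_lower) simp
  ultimately show ?thesis using that by simp
qed

lemma Fobj_minus_Fstar_nonneg: "0 \<le> Fobj f psi y - Fstar f psi"
  unfolding Fstar_def by (rule ereal_diff_positive, rule INF_lower) simp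

lemma Qm_eq_real:
  "psi x = ereal px \<Longrightarrow> psi (x + d) = ereal pd \<Longrightarrow>
   Qm gradf psi x H d = ereal (gradf x \<bullet> d + 1/2 * (d \<bullet> (H *v d)) + pd - px)"
  by (simp add: Qm_def)

lemma Qm_identity_eq_real:
  "psi x = ereal px \<Longrightarrow> psi (x + e) = ereal p \<Longrightarrow>
   Qm gradf psi x (mat 1) e = ereal (gradf x \<bullet> e + (e \<bullet> e) / 2 + p - px)"
  by (simp add: Qm_def)

lemma Qm_zero: "psi x = ereal px \<Longrightarrow> Qm gradf psi x H 0 = 0"
  by (simp add: Qm_def zero_ereal_def)

lemma Qm_finite_psi_real:
  assumes A1: "assumption1 f gradf L psi" and px: "psi x = ereal px"
    and "Qm gradf psi x H d \<noteq> \<infinity>"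
  obtains pd where "psi (x + d) = ereal pd"
  using assms assumption1_psi_not_MInf[OF A1, of "x + d"]
  by (cases "psi (x + d)") (auto simp: Qm_def)

lemma Qstar_le_Qm: "Qstar gradf psi x H \<le> Qm gradf psi x H e"
  unfolding Qstar_def by (rule INF_lower) simp

lemma Qstar_nonpos: "psi x = ereal px \<Longrightarrow> Qstar gradf psi x H \<le> 0"
  using Qstar_le_Qm[of gradf psi x H 0] by (simp add: Qm_zero)

lemma Qstar_le_segment:
  assumes A1: "assumption1 f gradf L psi" and px: "psi x = ereal px"
    and pd: "psi (x + d) = ereal pd" and s: "0 \<le> s" "s \<le> 1"
  shows "Qstar gradf psi x H \<le> ereal (s * (gradf x \<bullet> d + pd - px) + s\<^sup>2 * (d \<bullet> (H *v d)) / 2)"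
proof -
  obtain p where p: "psi (x + s *\<^sub>R d) = ereal p" "p \<le> (1 - s) * px + s * pd"
    using assumption1_psi_segment_real[OF A1 s px pd] by blast
  have "Qstar gradf psi x H \<le> Qm gradf psi x H (s *\<^sub>R d)" by (rule Qstar_le_Qm)
  also have "\<dots> = ereal (s * (gradf x \<bullet> d) + s\<^sup>2 * (d \<bullet> (H *v d)) / 2 + p - px)"
    using Qm_eq_real[OF px p(1)]
    by (simp add: matrix_vector_mult_scaleR power2_eq_square)
  also have "\<dots> \<le> ereal (s * (gradf x \<bullet> d + pd - px) + s\<^sup>2 * (d \<bullet> (H *v d)) / 2)"
    using p(2) by (simp add: algebra_simps)
  finally show ?thesis .
qed

section \<open>Inexact solutions of the subproblem\<close>

lemma inexact_real_values:
  assumes A1: "assumption1 f gradf L psi" and px: "psi x = ereal px"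
    and inx: "inexact \<eta> gradf psi x H d" and eta: "0 \<le> \<eta>" "\<eta> < 1"
  obtains qs pd where "Qstar gradf psi x H = ereal qs" "psi (x + d) = ereal pd" "qs \<le> 0"
    "gradf x \<bullet> d + 1/2 * (d \<bullet> (H *v d)) + pd - px \<le> (1 - \<eta>) * qs"
proof -
  have q0: "Qstar gradf psi x H \<le> 0" using Qstar_nonpos px by blast
  have le: "Qm gradf psi x H d \<le> ereal (1 - \<eta>) * Qstar gradf psi x H"
    using inx by (simp add: inexact_def)
  have Qm_MInf: "Qm gradf psi x H d \<noteq> -\<infinity>"
    using px assumption1_psi_not_MInf[OF A1, of "x + d"] by (cases "psi (x + d)") (auto simp: Qm_def)
  obtain qs where qs: "Qstar gradf psi x H = ereal qs"
    using q0 le Qm_MInf eta by (cases "Qstar gradf psi x H") auto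
  have "Qm gradf psi x H d \<noteq> \<infinity>" using le qs by auto
  then obtain pd where pd: "psi (x + d) = ereal pd" by (rule Qm_finite_psi_real[OF A1 px])
  show ?thesis using that[OF qs pd] q0 le qs px pd by (simp add: Qm_eq_real)
qed

text \<open>Here D is \<Delta>, q is d'Hd/2 and qs is Q*, which lies below the model value s D + s^2 q
  along the ray.  Taking s = -D/(2q) turns inexactness into a quadratic inequality in -D with
  roots 2q/(1 \<plusminus> \<surd>\<eta>).\<close>
lemma inexact_scalar_bound:
  fixes D q qs \<eta> :: real
  assumes eta: "0 \<le> \<eta>" "\<eta> < 1" and q: "0 \<le> q" and h: "D + q \<le> (1 - \<eta>) * qs"
    and hs: "\<And>s. 0 \<le> s \<Longrightarrow> s \<le> 1 \<Longrightarrow> qs \<le> s * D + s\<^sup>2 * q"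
  shows "2 * q / (1 + sqrt \<eta>) \<le> - D"
proof -
  define e where "e = sqrt \<eta>"
  have e0: "0 \<le> e" and ee: "\<eta> = e\<^sup>2" using eta by (auto simp: e_def)
  have qs0: "qs \<le> 0" using hs[of 0] by simp
  have D0: "D \<le> -q" using h qs0 eta mult_nonneg_nonpos[of "1 - \<eta>" qs] by linarith
  consider "q = 0" | "2 * q \<le> - D" | "0 < q" "- D < 2 * q" using q by linarith
  then show ?thesis
  proof cases
    case 1 then show ?thesis using D0 by simp
  next
    case 2
    have "2 * q / (1 + e) \<le> 2 * q" using q e0 by (simp add: divide_le_eq distrib_left)
    then show ?thesis using 2 e_def by simp
  next
    case 3
    define s where "s = - D / (2 * q)"
    have s: "0 \<le> s" "s \<le> 1" using D0 3 unfolding s_def by (auto simp: divide_simps)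
    have "qs \<le> - (D\<^sup>2) / (4 * q)"
      using hs[OF s] 3 by (simp add: s_def power2_eq_square field_simps)
    then have "(1 - \<eta>) * qs \<le> (1 - \<eta>) * (- (D\<^sup>2) / (4 * q))" using eta by (intro mult_left_mono) auto
    with h have "4 * q * (D + q) \<le> 4 * q * ((1 - \<eta>) * (- (D\<^sup>2) / (4 * q)))"
      using 3 by (intro mult_left_mono) auto
    also have "\<dots> = - ((1 - \<eta>) * D\<^sup>2)" using 3 by simp
    finally have key: "((1 + e) * (-D) - 2 * q) * ((1 - e) * (-D) - 2 * q) \<le> 0"
      using 3 by (simp add: ee algebra_simps power2_eq_square)
    have "0 \<le> e * (- D)" using e0 D0 3 by (intro mult_nonneg_nonneg) auto
    then have "(1 - e) * (-D) - 2 * q < 0" using 3 by (simp add: algebra_simps)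
    with key have "0 \<le> (1 + e) * (-D) - 2 * q" by (smt (verit) mult_neg_neg)
    then have "2 * q \<le> (-D) * (1 + e)" by (simp add: algebra_simps)
    moreover have "0 < 1 + e" using e0 by simp
    ultimately show ?thesis by (simp add: e_def pos_divide_le_eq)
  qed
qed

lemma inexact_neg_Delta_bound:
  assumes A1: "assumption1 f gradf L psi" and px: "psi x = ereal px"
    and inx: "inexact \<eta> gradf psi x H d" and eta: "0 \<le> \<eta>" "\<eta> < 1"
    and psd: "0 \<le> d \<bullet> (H *v d)"
  obtains pd where "psi (x + d) = ereal pd"
    "d \<bullet> (H *v d) / (1 + sqrt \<eta>) \<le> - (gradf x \<bullet> d + pd - px)"
proof -
  obtain qs pd where qs: "Qstar gradf psi x H = ereal qs" and pd: "psi (x + d) = ereal pd"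
    and h: "gradf x \<bullet> d + 1/2 * (d \<bullet> (H *v d)) + pd - px \<le> (1 - \<eta>) * qs"
    using inexact_real_values[OF A1 px inx eta] by blast
  have "2 * (d \<bullet> (H *v d) / 2) / (1 + sqrt \<eta>) \<le> - (gradf x \<bullet> d + pd - px)"
  proof (rule inexact_scalar_bound[OF eta])
    show "gradf x \<bullet> d + pd - px + d \<bullet> (H *v d) / 2 \<le> (1 - \<eta>) * qs" using h by simp
    fix s :: real assume "0 \<le> s" "s \<le> 1"
    then show "qs \<le> s * (gradf x \<bullet> d + pd - px) + s\<^sup>2 * (d \<bullet> (H *v d) / 2)"
      using Qstar_le_segment[OF A1 px pd, of s H] qs by simp
  qed (use psd in simp)
  then show ?thesis using that[OF pd] by simp
qed

lemma armijo_if_step_small: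
  assumes A1: "assumption1 f gradf L psi" and px: "psi x = ereal px"
    and inx: "inexact \<eta> gradf psi x H d" and eta: "0 \<le> \<eta>" "\<eta> < 1"
    and curv: "\<sigma> * (d \<bullet> d) \<le> d \<bullet> (H *v d)" and \<sigma>: "0 < \<sigma>"
    and \<gamma>: "\<gamma> < 1" and a: "0 < a" "a \<le> 1"
    and a_small: "a \<le> 2 * (1 - \<gamma>) * \<sigma> / (L * (1 + sqrt \<eta>))"
  shows "armijo f gradf psi \<gamma> x d a"
proof -
  have "0 \<le> d \<bullet> (H *v d)" using curv \<sigma> by (smt (verit) inner_ge_zero mult_nonneg_nonneg)
  then obtain pd where pd: "psi (x + d) = ereal pd"
    and nd: "d \<bullet> (H *v d) / (1 + sqrt \<eta>) \<le> - (gradf x \<bullet> d + pd - px)"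
    using inexact_neg_Delta_bound[OF A1 px inx eta] by blast
  define \<Delta> where "\<Delta> = gradf x \<bullet> d + pd - px"
  define e where "e = sqrt \<eta>"
  have e0: "0 \<le> e" using eta by (simp add: e_def)
  have Lp: "0 < L" using assumption1_L_pos[OF A1] .
  obtain p where p: "psi (x + a *\<^sub>R d) = ereal p" "p \<le> (1 - a) * px + a * pd"
    using assumption1_psi_segment_real[OF A1 _ a(2) px pd] a by auto
  have fd: "f (x + a *\<^sub>R d) \<le> f x + a * (gradf x \<bullet> d) + L / 2 * (a\<^sup>2 * (d \<bullet> d))"
    using assumption1_descent_lemma[OF A1, of x "a *\<^sub>R d"]
    by (simp add: power_mult_distrib power2_norm_eq_inner)
  have "L * a \<le> 2 * (1 - \<gamma>) * \<sigma> / (1 + e)"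
    using mult_left_mono[OF a_small, of L] Lp by (simp add: e_def)
  then have "L * a * ((d \<bullet> d) / 2) \<le> 2 * (1 - \<gamma>) * \<sigma> / (1 + e) * ((d \<bullet> d) / 2)"
    by (intro mult_right_mono) auto
  also have "\<dots> = (1 - \<gamma>) * (\<sigma> * (d \<bullet> d) / (1 + e))" using e0 by (simp add: field_simps)
  finally have "L * a * (d \<bullet> d) / 2 \<le> (1 - \<gamma>) * (\<sigma> * (d \<bullet> d) / (1 + e))" by simp
  also have "\<dots> \<le> (1 - \<gamma>) * (- \<Delta>)"
  proof -
    have "\<sigma> * (d \<bullet> d) / (1 + e) \<le> - \<Delta>"
      using divide_right_mono[OF curv, of "1 + e"] e0 nd by (simp add: \<Delta>_def e_def)
    then show ?thesis using \<gamma> by (intro mult_left_mono) auto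
  qed
  finally have "a * (L * a * (d \<bullet> d) / 2) \<le> a * ((1 - \<gamma>) * (- \<Delta>))" using a by (intro mult_left_mono) auto
  then have "f (x + a *\<^sub>R d) + p \<le> f x + px + a * \<gamma> * \<Delta>"
    using fd p(2) unfolding \<Delta>_def by (simp add: algebra_simps power2_eq_square)
  then show ?thesis using p px pd unfolding armijo_def Fobj_def Delta_def \<Delta>_def by simp
qed

lemma curvature_threshold_scalar:
  fixes L c e \<gamma> n q \<Delta> :: real
  assumes e: "0 \<le> e" and \<gamma>: "0 < \<gamma>" "\<gamma> \<le> 1"
    and Lc: "L * (1 + e) \<le> c * (2 - \<gamma> * (1 - e))"
    and curv: "c * n \<le> q" and n: "0 \<le> n" and q: "q / (1 + e) \<le> - \<Delta>"
  shows "L * n \<le> 2 * (1 - \<gamma>) * (- \<Delta>) + \<gamma> * q"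
proof -
  have "0 \<le> \<gamma> * e" using e \<gamma> by simp
  then have den: "0 < 2 - \<gamma> * (1 - e)" using \<gamma> by (simp add: algebra_simps)
  have "L * n * (1 + e) \<le> c * n * (2 - \<gamma> * (1 - e))"
    using mult_right_mono[OF Lc n] by (simp add: algebra_simps)
  also have "\<dots> \<le> q * (2 - \<gamma> * (1 - e))"
    using curv den by (intro mult_right_mono) auto
  also have "\<dots> = 2 * (1 - \<gamma>) * q + \<gamma> * q * (1 + e)" by (simp add: algebra_simps)
  also have "\<dots> \<le> 2 * (1 - \<gamma>) * ((- \<Delta>) * (1 + e)) + \<gamma> * q * (1 + e)"
  proof -
    have "q \<le> (- \<Delta>) * (1 + e)" using q e by (simp add: pos_divide_le_eq)
    then show ?thesis using \<gamma> by (intro add_right_mono mult_left_mono) auto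
  qed
  also have "\<dots> = (2 * (1 - \<gamma>) * (- \<Delta>) + \<gamma> * q) * (1 + e)" by (simp add: algebra_simps)
  finally show ?thesis using e mult_le_cancel_right_pos[of "1 + e"] by simp
qed

lemma accept2_if_curvature_large:
  assumes A1: "assumption1 f gradf L psi" and px: "psi x = ereal px"
    and inx: "inexact \<eta> gradf psi x H d" and eta: "0 \<le> \<eta>" "\<eta> < 1"
    and curv: "c * (d \<bullet> d) \<le> d \<bullet> (H *v d)" and \<gamma>: "0 < \<gamma>" "\<gamma> \<le> 1"
    and c_large: "L * (1 + sqrt \<eta>) / (2 - \<gamma> * (1 - sqrt \<eta>)) \<le> c"
  shows "accept2 f gradf psi \<gamma> x H d"
proof -
  have den: "0 < 2 - \<gamma> * (1 - sqrt \<eta>)"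
    using mult_mono[of \<gamma> 1 "1 - sqrt \<eta>" 1] \<gamma> eta by simp
  then have Lc: "L * (1 + sqrt \<eta>) \<le> c * (2 - \<gamma> * (1 - sqrt \<eta>))"
    using c_large by (simp add: pos_divide_le_eq)
  have "0 \<le> c" using Lc den assumption1_L_pos[OF A1] eta
    by (smt (verit) mult_nonneg_nonneg real_sqrt_ge_zero zero_le_mult_iff)
  then have "0 \<le> d \<bullet> (H *v d)" using curv by (smt (verit) inner_ge_zero mult_nonneg_nonneg)
  then obtain pd where pd: "psi (x + d) = ereal pd"
    and nd: "d \<bullet> (H *v d) / (1 + sqrt \<eta>) \<le> - (gradf x \<bullet> d + pd - px)"
    using inexact_neg_Delta_bound[OF A1 px inx eta] by blast
  obtain qs where qs0: "qs \<le> 0"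
    and h: "gradf x \<bullet> d + 1/2 * (d \<bullet> (H *v d)) + pd - px \<le> (1 - \<eta>) * qs"
    using inexact_real_values[OF A1 px inx eta] pd by (metis ereal.inject)
  define \<Delta> where "\<Delta> = gradf x \<bullet> d + pd - px"
  define q where "q = d \<bullet> (H *v d)"
  have Q0: "\<Delta> + q / 2 \<le> 0"
    using h mult_nonneg_nonpos[of "1 - \<eta>" qs] qs0 eta unfolding \<Delta>_def q_def by linarith
  have "L * (d \<bullet> d) \<le> 2 * (1 - \<gamma>) * (- \<Delta>) + \<gamma> * q"
    using curvature_threshold_scalar[OF _ \<gamma> Lc curv[folded q_def] _ nd[folded \<Delta>_def q_def]] eta
    by simp
  then have "- (\<gamma> * (\<Delta> + q / 2)) \<le> f x + px - (f (x + d) + pd)"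
    using assumption1_descent_lemma[OF A1, of x d]
    unfolding \<Delta>_def by (simp add: power2_norm_eq_inner algebra_simps)
  moreover have "0 \<le> - (\<gamma> * (\<Delta> + q / 2))" using Q0 \<gamma> by (simp add: mult_nonneg_nonpos)
  moreover have "Qm gradf psi x H d = ereal (\<Delta> + q / 2)"
    using Qm_eq_real[OF px pd] by (simp add: \<Delta>_def q_def)
  ultimately show ?thesis unfolding accept2_def Fobj_def using px pd by simp
qed

section \<open>The map G\<close>

lemma Qm_identity_lower_bound:
  assumes A1: "assumption1 f gradf L psi" and px: "psi x = ereal px"
    and qs: "Qstar gradf psi x H = ereal qs"
    and upper: "\<forall>v. v \<bullet> (H *v v) \<le> M * (v \<bullet> v)" and M: "0 < M"
  shows "ereal (qs * (2 * max M 1) + (e \<bullet> e) / 4) \<le> Qm gradf psi x (mat 1) e"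
proof (cases "psi (x + e)")
  case PInf then show ?thesis using px by (simp add: Qm_def)
next
  case MInf then show ?thesis using assumption1_psi_not_MInf[OF A1] by simp
next
  case (real p)
  define s where "s = 1 / (2 * max M 1)"
  have s: "0 < s" "s \<le> 1" and sM: "s * M \<le> 1/2" using M by (auto simp: s_def field_simps)
  have "qs \<le> s * (gradf x \<bullet> e + p - px) + s\<^sup>2 * (e \<bullet> (H *v e)) / 2"
    using Qstar_le_segment[OF A1 px real, of s H] s qs by simp
  also have "\<dots> \<le> s * (gradf x \<bullet> e + p - px) + s * ((s * M) * (e \<bullet> e)) / 2"
    using upper s by (simp add: power2_eq_square mult_left_mono)
  also have "\<dots> \<le> s * (gradf x \<bullet> e + p - px + (e \<bullet> e) / 4)"
    using mult_right_mono[OF sM, of "e \<bullet> e"] s by (simp add: algebra_simps)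
  finally have "qs / s \<le> gradf x \<bullet> e + p - px + (e \<bullet> e) / 4"
    using s by (simp add: divide_le_eq mult.commute)
  then show ?thesis using Qm_identity_eq_real[OF px real] by (simp add: s_def)
qed

lemma Qm_identity_sublevel_compact:
  fixes x :: "real^'n"
  assumes A1: "assumption1 f gradf L psi" and px: "psi x = ereal px"
    and lower: "\<And>e. ereal (K + (e \<bullet> e) / 4) \<le> Qm gradf psi x (mat 1) e"
  shows "compact {e. Qm gradf psi x (mat 1) e \<le> ereal r}"
proof -
  define g where "g e = (x + e, r - gradf x \<bullet> e - (e \<bullet> e) / 2 + px)" for e
  have "{e. Qm gradf psi x (mat 1) e \<le> ereal r} = g -` {(y, a). psi y \<le> ereal a}"
  proof (rule set_eqI)
    fix e show "e \<in> {e. Qm gradf psi x (mat 1) e \<le> ereal r} \<longleftrightarrow> e \<in> g -` {(y, a). psi y \<le> ereal a}"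
      using px assumption1_psi_not_MInf[OF A1, of "x + e"]
      by (cases "psi (x + e)") (auto simp: Qm_def g_def)
  qed
  moreover have "closed (g -` {(y, a). psi y \<le> ereal a})"
  proof (rule continuous_closed_vimage)
    show "closed {(y, a::real). psi y \<le> ereal a}"
      using A1 by (simp add: assumption1_def ext_closed_def)
    show "continuous (at e) g" for e unfolding g_def by (intro continuous_intros) simp
  qed
  moreover have "norm e \<le> sqrt (4 * \<bar>r - K\<bar>)" if "Qm gradf psi x (mat 1) e \<le> ereal r" for e
  proof -
    have "ereal (K + (e \<bullet> e) / 4) \<le> ereal r" using lower[of e] that by (rule order_trans)
    then have "e \<bullet> e \<le> 4 * \<bar>r - K\<bar>" by (simp add: abs_if)
    then show ?thesis by (simp add: norm_eq_sqrt_inner real_sqrt_le_mono)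
  qed
  then have "bounded {e. Qm gradf psi x (mat 1) e \<le> ereal r}" unfolding bounded_iff by blast
  ultimately show ?thesis by (simp add: compact_eq_bounded_closed)
qed

lemma Qm_identity_has_minimizer:
  fixes x :: "real^'n"
  assumes A1: "assumption1 f gradf L psi" and px: "psi x = ereal px"
    and lower: "\<And>e. ereal (K + (e \<bullet> e) / 4) \<le> Qm gradf psi x (mat 1) e"
  obtains l where "\<forall>e. Qm gradf psi x (mat 1) l \<le> Qm gradf psi x (mat 1) e"
proof -
  define Q where "Q = Qm gradf psi x (mat 1)"
  have "(INF e. Q e) \<le> 0" using Qm_zero[of psi x px, OF px] unfolding Q_def by (metis INF_lower UNIV_I)
  moreover have "ereal K \<le> (INF e. Q e)"
  proof (rule INF_greatest)
    fix e :: "real^'n"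
    have "ereal K \<le> ereal (K + (e \<bullet> e) / 4)" by simp
    then show "ereal K \<le> Q e" using lower[of e] unfolding Q_def by (rule order_trans)
  qed
  ultimately obtain m where "(INF e. Q e) = ereal m" by (cases "INF e. Q e") auto
  then obtain l where "\<And>e. Q l \<le> Q e"
    using attains_Inf_if_compact_sublevels Qm_identity_sublevel_compact[OF A1 px lower]
    unfolding Q_def by blast
  then show ?thesis using that unfolding Q_def by blast
qed

lemma Qm_identity_minimizer_unique:
  assumes A1: "assumption1 f gradf L psi" and px: "psi x = ereal px"
    and a: "\<forall>e. Qm gradf psi x (mat 1) a \<le> Qm gradf psi x (mat 1) e"
    and b: "\<forall>e. Qm gradf psi x (mat 1) b \<le> Qm gradf psi x (mat 1) e"
  shows "a = b"
proof (rule ccontr)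
  assume "a \<noteq> b"
  then have pos: "0 < (b - a) \<bullet> (b - a)" by simp
  define Q where "Q = Qm gradf psi x (mat 1)"
  have Q0: "Q a \<le> 0" "Q b \<le> 0"
    using a b Qm_zero[of psi x px, OF px] by (auto simp: Q_def dest: spec[of _ 0])
  have "Q a \<noteq> \<infinity>" "Q b \<noteq> \<infinity>" using Q0 by auto
  then obtain pa pb where pa: "psi (x + a) = ereal pa" and pb: "psi (x + b) = ereal pb"
    using Qm_finite_psi_real[OF A1 px] unfolding Q_def by metis
  define c where "c = a + (1/2) *\<^sub>R (b - a)"
  have "psi ((x + a) + (b - a)) = ereal pb" using pb by simp
  from assumption1_psi_segment_real[OF A1 _ _ pa this, of "1/2"]
  obtain pc where "psi ((x + a) + (1/2) *\<^sub>R (b - a)) = ereal pc" "pc \<le> (1 - 1/2) * pa + 1/2 * pb"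
    by auto
  then have pc: "psi (x + c) = ereal pc" and pc_le: "pc \<le> (pa + pb) / 2"
    by (simp_all add: c_def add.assoc)
  have "Q a = Q b" using a b by (auto simp: Q_def intro: antisym)
  moreover have "Q a \<le> Q c" using a by (simp add: Q_def)
  ultimately have
    "gradf x \<bullet> a + (a \<bullet> a) / 2 + pa = gradf x \<bullet> b + (b \<bullet> b) / 2 + pb"
    "gradf x \<bullet> a + (a \<bullet> a) / 2 + pa \<le> gradf x \<bullet> c + (c \<bullet> c) / 2 + pc"
    using Qm_identity_eq_real[OF px pa] Qm_identity_eq_real[OF px pb] Qm_identity_eq_real[OF px pc]
    by (simp_all add: Q_def)
  moreover have "c \<bullet> c = (a \<bullet> a + 2 * (a \<bullet> b) + b \<bullet> b) / 4"
    and "gradf x \<bullet> c = (gradf x \<bullet> a + gradf x \<bullet> b) / 2"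
    and "(b - a) \<bullet> (b - a) = a \<bullet> a - 2 * (a \<bullet> b) + b \<bullet> b"
    by (simp_all add: c_def algebra_simps inner_commute)
  ultimately show False using pc_le pos by (simp add: field_simps)
qed

lemma Gmap_eq_minimizer:
  assumes A1: "assumption1 f gradf L psi" and px: "psi x = ereal px"
    and l: "\<forall>e. Qm gradf psi x (mat 1) l \<le> Qm gradf psi x (mat 1) e"
  shows "Gmap gradf psi x = l"
  unfolding Gmap_def
  by (rule the1_equality) (use l Qm_identity_minimizer_unique[OF A1 px] in blast)+

text \<open>First-order optimality of the minimiser G without subgradients: comparing the model
  at G and at t G for t < 1 and letting t tend to 1.\<close>
lemma Qm_identity_minimizer_decrease:
  assumes A1: "assumption1 f gradf L psi" and px: "psi x = ereal px"
    and G: "\<forall>e. Qm gradf psi x (mat 1) G \<le> Qm gradf psi x (mat 1) e"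
  obtains pG where "psi (x + G) = ereal pG" "gradf x \<bullet> G + pG - px \<le> - (G \<bullet> G)"
proof -
  have "Qm gradf psi x (mat 1) G \<le> 0"
    using G Qm_zero[of psi x px, OF px] by metis
  then have "Qm gradf psi x (mat 1) G \<noteq> \<infinity>" by auto
  then obtain pG where pG: "psi (x + G) = ereal pG" by (rule Qm_finite_psi_real[OF A1 px])
  define D where "D = gradf x \<bullet> G + pG - px"
  define n where "n = G \<bullet> G"
  have n0: "0 \<le> n" by (simp add: n_def)
  have D_le: "D \<le> - (1 + t) * n / 2" if t: "0 \<le> t" "t < 1" for t
  proof -
    obtain p where p: "psi (x + t *\<^sub>R G) = ereal p" "p \<le> (1 - t) * px + t * pG"
      using assumption1_psi_segment_real[OF A1 t(1) _ px pG] t by auto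
    have "Qm gradf psi x (mat 1) G \<le> Qm gradf psi x (mat 1) (t *\<^sub>R G)" using G by simp
    then have "D + n / 2 \<le> t * D + t\<^sup>2 * n / 2"
      using Qm_identity_eq_real[OF px pG] Qm_identity_eq_real[OF px p(1)] p(2)
      by (simp add: D_def n_def algebra_simps power2_eq_square)
    then have "(1 - t) * D \<le> (1 - t) * (- (1 + t) * n / 2)"
      by (simp add: algebra_simps power2_eq_square)
    then show ?thesis using t by simp
  qed
  have "D \<le> - n"
  proof (rule field_le_epsilon)
    fix \<epsilon> :: real assume \<epsilon>: "0 < \<epsilon>"
    define \<delta> where "\<delta> = min 1 (\<epsilon> / (n + 1))"
    have \<delta>: "0 < \<delta>" "\<delta> \<le> 1" using \<epsilon> n0 by (auto simp: \<delta>_def)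
    have "\<delta> * n \<le> \<epsilon> / (n + 1) * n" using n0 by (intro mult_right_mono) (auto simp: \<delta>_def)
    also have "\<dots> \<le> \<epsilon>" using \<epsilon> n0 by (simp add: field_simps)
    finally have "\<delta> * n \<le> \<epsilon>" .
    moreover have "D \<le> - n + \<delta> * n / 2"
      using D_le[of "1 - \<delta>"] \<delta> by (simp add: field_simps)
    ultimately show "D \<le> - n + \<epsilon>" using \<epsilon> by linarith
  qed
  then show ?thesis using that pG by (simp add: D_def n_def)
qed

lemma Qstar_le_neg_norm_Gmap:
  assumes A1: "assumption1 f gradf L psi" and px: "psi x = ereal px"
    and upper: "\<forall>v. v \<bullet> (H *v v) \<le> M * (v \<bullet> v)" and M: "0 < M"
  shows "Qstar gradf psi x H \<le> ereal (- (norm (Gmap gradf psi x))\<^sup>2 / (2 * max M 1))"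
proof (cases "Qstar gradf psi x H")
  case PInf then show ?thesis using Qstar_nonpos[of psi x px gradf H, OF px] by simp
next
  case MInf then show ?thesis by simp
next
  case (real qs)
  obtain l where l: "\<forall>e. Qm gradf psi x (mat 1) l \<le> Qm gradf psi x (mat 1) e"
    using Qm_identity_has_minimizer[OF A1 px Qm_identity_lower_bound[OF A1 px real upper M]] .
  obtain pl where pl: "psi (x + l) = ereal pl" and decrease: "gradf x \<bullet> l + pl - px \<le> - (l \<bullet> l)"
    using Qm_identity_minimizer_decrease[OF A1 px l] .
  define s where "s = 1 / max M 1"
  have s: "0 < s" "s \<le> 1" and sM: "s * M \<le> 1" using M by (auto simp: s_def field_simps)
  have "qs \<le> s * (gradf x \<bullet> l + pl - px) + s\<^sup>2 * (l \<bullet> (H *v l)) / 2"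
    using Qstar_le_segment[OF A1 px pl, of s H] s real by simp
  also have "\<dots> \<le> s * (- (l \<bullet> l)) + s * ((s * M) * (l \<bullet> l)) / 2"
    using decrease upper s by (intro add_mono mult_left_mono) (auto simp: power2_eq_square)
  also have "\<dots> \<le> - s * (l \<bullet> l) / 2"
    using mult_right_mono[OF sM, of "l \<bullet> l"] s by (simp add: algebra_simps)
  finally show ?thesis
    using real Gmap_eq_minimizer[OF A1 px l] by (simp add: s_def power2_norm_eq_inner)
qed

lemma inexact_Qm_le_neg_norm_Gmap:
  assumes A1: "assumption1 f gradf L psi" and px: "psi x = ereal px"
    and inx: "inexact \<eta> gradf psi x H d" and eta: "\<eta> \<le> 1"
    and upper: "\<forall>v. v \<bullet> (H *v v) \<le> M * (v \<bullet> v)" and M: "0 < M"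
  shows "Qm gradf psi x H d \<le> ereal (- ((1 - \<eta>) * (norm (Gmap gradf psi x))\<^sup>2 / (2 * max M 1)))"
proof -
  have "Qm gradf psi x H d \<le> ereal (1 - \<eta>) * Qstar gradf psi x H"
    using inx by (simp add: inexact_def)
  also have "\<dots> \<le> ereal (1 - \<eta>) * ereal (- (norm (Gmap gradf psi x))\<^sup>2 / (2 * max M 1))"
    using Qstar_le_neg_norm_Gmap[OF A1 px upper M] eta by (intro ereal_mult_left_mono) auto
  finally show ?thesis by simp
qed

section \<open>Rates from sufficient decrease\<close>

lemma decrease_keeps_psi_finite:
  assumes A1: "assumption1 f gradf L psi" and px0: "psi (x 0) \<noteq> \<infinity>"
    and decrease: "\<And>t. psi (x t) \<noteq> \<infinity> \<Longrightarrow> Fobj f psi (x (Suc t)) \<le> Fobj f psi (x t) - ereal (r t)"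
  shows "psi (x t) \<noteq> \<infinity>"
proof (induction t)
  case (Suc t)
  then obtain p where "psi (x t) = ereal p" using assumption1_psi_finite[OF A1] by blast
  then show ?case using decrease[OF Suc] by (auto simp: Fobj_def)
qed (fact px0)

lemma minGsq_le_of_sufficient_decrease:
  assumes A1: "assumption1 f gradf L psi" and px0: "psi (x 0) \<noteq> \<infinity>"
    and decrease: "\<And>t. psi (x t) \<noteq> \<infinity> \<Longrightarrow>
      Fobj f psi (x (Suc t)) \<le> Fobj f psi (x t) - ereal (a t * c * (norm (Gmap gradf psi (x t)))\<^sup>2)"
    and c: "0 < c" and a: "\<And>t. 0 < a t"
  shows "ereal (minGsq gradf psi x k)
    \<le> (Fobj f psi (x 0) - Fstar f psi) * ereal (1 / (c * (real k + 1) * Min (a ` {..k})))"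
proof -
  obtain fs where fs: "Fstar f psi = ereal fs" and lower: "\<And>y. ereal fs \<le> Fobj f psi y"
    using Fstar_eq_real[OF A1 px0] by blast
  define F where "F t = real_of_ereal (Fobj f psi (x t))" for t
  have Fobj_eq: "Fobj f psi (x t) = ereal (F t)" for t
    using decrease_keeps_psi_finite[OF A1 px0 decrease, of t] assumption1_psi_finite[OF A1]
    unfolding F_def Fobj_def by (metis plus_ereal.simps(1) real_of_ereal.simps(1))
  define n where "n t = (norm (Gmap gradf psi (x t)))\<^sup>2" for t
  have "Min (n ` {..k}) * (real k + 1) * Min (a ` {..k}) * c \<le> F 0 - fs"
  proof (rule telescoping_Min_bound[OF _ _ c a])
    show "F (Suc t) \<le> F t - a t * c * n t" for t
      using decrease[of t] decrease_keeps_psi_finite[OF A1 px0 decrease, of t]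
      by (simp add: Fobj_eq n_def)
    show "fs \<le> F t" for t using lower[of "x t"] by (simp add: Fobj_eq)
  qed (simp add: n_def)
  moreover have "0 < c * (real k + 1) * Min (a ` {..k})"
    using c a Min_in[of "a ` {..k}"] by fastforce
  ultimately have "Min (n ` {..k}) \<le> (F 0 - fs) * (1 / (c * (real k + 1) * Min (a ` {..k})))"
    by (simp add: field_simps)
  then show ?thesis by (simp add: minGsq_def n_def fs Fobj_eq)
qed

lemma cconst_ge:
  assumes "0 < \<sigma>" "\<sigma> \<le> M"
  shows "4 * \<sigma> * max M 1 \<le> cconst \<sigma> M"
proof -
  define w where "w = 1 + 1 / \<sigma> + sqrt (1 - 2 / M + 1 / \<sigma>\<^sup>2)"
  have "(1 - 1 / \<sigma>)\<^sup>2 \<le> 1 - 2 / M + 1 / \<sigma>\<^sup>2"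
    using assms frac_le[of 1 1 \<sigma> M] by (simp add: power2_eq_square field_simps)
  then have "\<bar>1 - 1 / \<sigma>\<bar> \<le> sqrt (1 - 2 / M + 1 / \<sigma>\<^sup>2)"
    using real_sqrt_le_mono by fastforce
  then have w2: "2 \<le> w" and w3: "2 / \<sigma> \<le> w" unfolding w_def by (auto simp: abs_if split: if_splits)
  have cc: "cconst \<sigma> M = M\<^sup>2 * w\<^sup>2" by (simp add: cconst_def w_def)
  show ?thesis
  proof (cases "1 \<le> M")
    case True
    have "4 * \<sigma> * max M 1 \<le> 4 * M * M" using assms True by (simp add: mult_right_mono)
    also have "\<dots> \<le> M\<^sup>2 * w\<^sup>2"
      using power_mono[OF w2, of 2] True by (simp add: power2_eq_square mult_left_mono)
    finally show ?thesis using cc by simp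
  next
    case False
    have "4 * \<sigma> * max M 1 \<le> 4" using assms False by simp
    also have "\<dots> \<le> M\<^sup>2 * (2 / \<sigma>)\<^sup>2"
    proof -
      have "1 \<le> (M / \<sigma>)\<^sup>2" using assms by (simp add: one_le_power)
      then show ?thesis by (simp add: power_divide field_simps)
    qed
    also have "\<dots> \<le> M\<^sup>2 * w\<^sup>2" using w3 assms by (intro mult_left_mono power_mono) auto
    finally show ?thesis using cc by simp
  qed
qed

lemma rate_factor_le_cconst:
  assumes "0 < \<sigma>" "\<sigma> \<le> M" "0 < \<gamma>" "\<eta> < 1" "0 < a" "0 < N"
  shows "1 / (\<gamma> * (1 - \<eta>) / (2 * max M 1) * N * a)
    \<le> 1 / (\<gamma> * N) * cconst \<sigma> M / (2 * (1 - \<eta>) * \<sigma> * a)"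
proof -
  have "2 * max M 1 \<le> cconst \<sigma> M / (2 * \<sigma>)"
    using cconst_ge[OF assms(1,2)] assms(1) by (simp add: field_simps)
  then have "2 * max M 1 / (\<gamma> * (1 - \<eta>) * N * a) \<le> cconst \<sigma> M / (2 * \<sigma>) / (\<gamma> * (1 - \<eta>) * N * a)"
    using assms by (intro divide_right_mono) auto
  then show ?thesis by (simp add: field_simps)
qed

section \<open>Algorithm 1\<close>

lemma alg1_step_size_pos:
  "alg1_run f gradf psi \<beta> \<gamma> \<eta> x H d \<alpha> \<Longrightarrow> 0 < \<alpha> k"
  unfolding alg1_run_def by (metis zero_less_power)

lemma alg1_sufficient_decrease:
  assumes A1: "assumption1 f gradf L psi" and run: "alg1_run f gradf psi \<beta> \<gamma> \<eta> x H d \<alpha>"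
    and px: "psi (x k) \<noteq> \<infinity>" and \<sigma>: "0 \<le> \<sigma>" and M: "0 < M"
    and H: "loewner_between \<sigma> (H k) M"
  shows "Fobj f psi (x (Suc k)) \<le> Fobj f psi (x k)
    - ereal (\<alpha> k * (\<gamma> * (1 - \<eta>) / (2 * max M 1)) * (norm (Gmap gradf psi (x k)))\<^sup>2)"
proof -
  obtain p where p: "psi (x k) = ereal p" using assumption1_psi_finite[OF A1 px] .
  have pars: "0 < \<gamma>" "\<eta> < 1"
    and inx: "inexact \<eta> gradf psi (x k) (H k) (d k)"
    and step: "x (Suc k) = x k + \<alpha> k *\<^sub>R d k"
    using run unfolding alg1_run_def by auto
  have arm: "armijo f gradf psi \<gamma> (x k) (d k) (\<alpha> k)"
    using run unfolding alg1_run_def by metis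
  have upper: "\<forall>v. v \<bullet> (H k *v v) \<le> M * (v \<bullet> v)" and psd: "0 \<le> d k \<bullet> (H k *v d k)"
    using H \<sigma> unfolding loewner_between_def by (auto intro: order_trans[rotated])
  define n where "n = (norm (Gmap gradf psi (x k)))\<^sup>2"
  have Qm: "Qm gradf psi (x k) (H k) (d k) \<le> ereal (- ((1 - \<eta>) * n / (2 * max M 1)))"
    using inexact_Qm_le_neg_norm_Gmap[OF A1 p inx _ upper M] pars by (simp add: n_def)
  then have "Qm gradf psi (x k) (H k) (d k) \<noteq> \<infinity>" by auto
  then obtain pd where pd: "psi (x k + d k) = ereal pd" by (rule Qm_finite_psi_real[OF A1 p])
  have "gradf (x k) \<bullet> d k + pd - p \<le> - ((1 - \<eta>) * n / (2 * max M 1))"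
    using Qm psd by (simp add: Qm_eq_real[OF p pd])
  then have "\<alpha> k * \<gamma> * (gradf (x k) \<bullet> d k + pd - p)
      \<le> \<alpha> k * \<gamma> * (- ((1 - \<eta>) * n / (2 * max M 1)))"
    using alg1_step_size_pos[OF run, of k] pars by (intro mult_left_mono) auto
  moreover have "Fobj f psi (x (Suc k)) \<le> ereal (f (x k) + p + \<alpha> k * \<gamma> * (gradf (x k) \<bullet> d k + pd - p))"
    using arm step p pd unfolding armijo_def Fobj_def Delta_def by simp
  ultimately have "Fobj f psi (x (Suc k))
      \<le> ereal (f (x k) + p - \<alpha> k * (\<gamma> * (1 - \<eta>) / (2 * max M 1)) * n)"
    by (auto elim!: order_trans)
  then show ?thesis using p by (simp add: Fobj_def n_def)
qed

lemma alg1_step_size_ge: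
  assumes A1: "assumption1 f gradf L psi" and run: "alg1_run f gradf psi \<beta> \<gamma> \<eta> x H d \<alpha>"
    and px: "psi (x k) \<noteq> \<infinity>" and \<sigma>: "0 < \<sigma>" and H: "loewner_between \<sigma> (H k) M"
  shows "min 1 (\<beta> * (2 * (1 - \<gamma>) * \<sigma> / (L * (1 + sqrt \<eta>)))) \<le> \<alpha> k"
proof -
  obtain p where p: "psi (x k) = ereal p" using assumption1_psi_finite[OF A1 px] .
  have pars: "0 < \<beta>" "\<beta> < 1" "\<gamma> < 1" "0 \<le> \<eta>" "\<eta> < 1"
    and inx: "inexact \<eta> gradf psi (x k) (H k) (d k)"
    using run unfolding alg1_run_def by auto
  obtain i where \<alpha>: "\<alpha> k = \<beta> ^ i"
    and fails: "\<forall>j<i. \<not> armijo f gradf psi \<gamma> (x k) (d k) (\<beta> ^ j)"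
    using run unfolding alg1_run_def by blast
  have curv: "\<sigma> * (d k \<bullet> d k) \<le> d k \<bullet> (H k *v d k)" using H by (simp add: loewner_between_def)
  show ?thesis
  proof (cases i)
    case (Suc j)
    have "0 < \<beta> ^ j" "\<beta> ^ j \<le> 1" using pars by (auto simp: power_le_one)
    moreover have "\<not> armijo f gradf psi \<gamma> (x k) (d k) (\<beta> ^ j)" using fails Suc by simp
    ultimately have "2 * (1 - \<gamma>) * \<sigma> / (L * (1 + sqrt \<eta>)) < \<beta> ^ j"
      using armijo_if_step_small[OF A1 p inx pars(4,5) curv \<sigma> pars(3)] by (meson not_le)
    then have "\<beta> * (2 * (1 - \<gamma>) * \<sigma> / (L * (1 + sqrt \<eta>))) \<le> \<beta> * \<beta> ^ j"
      using pars by (intro mult_left_mono) auto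
    then show ?thesis using \<alpha> Suc by simp
  qed (use \<alpha> in simp)
qed

lemma inverse_step_size_le:
  fixes \<eta> \<gamma> \<beta> \<sigma> L a :: real
  assumes "0 \<le> \<eta>" "\<eta> < 1" "\<gamma> < 1" "0 < \<beta>" "0 < \<sigma>" "0 < L"
    and a: "min 1 (\<beta> * (2 * (1 - \<gamma>) * \<sigma> / (L * (1 + sqrt \<eta>)))) \<le> a"
  shows "1 / ((1 - \<eta>) * a) \<le> max (1 / (1 - \<eta>)) (L / (2 * (1 - sqrt \<eta>) * (1 - \<gamma>) * \<sigma> * \<beta>))"
proof -
  define e where "e = sqrt \<eta>"
  have e: "0 \<le> e" "e < 1" and ee: "1 - \<eta> = (1 - e) * (1 + e)"
    using assms by (auto simp: e_def real_sqrt_lt_1_iff algebra_simps)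
  define T where "T = \<beta> * (2 * (1 - \<gamma>) * \<sigma> / (L * (1 + e)))"
  have T: "0 < T" using assms e by (simp add: T_def)
  consider "1 \<le> a" | "T \<le> a" using a by (auto simp: T_def e_def min_def split: if_splits)
  then show ?thesis
  proof cases
    case 1
    then have "1 / ((1 - \<eta>) * a) \<le> 1 / ((1 - \<eta>) * 1)"
      using assms by (intro divide_left_mono mult_left_mono mult_pos_pos) auto
    then show ?thesis by simp
  next
    case 2
    then have "1 / ((1 - \<eta>) * a) \<le> 1 / ((1 - \<eta>) * T)"
      using T assms by (intro divide_left_mono mult_left_mono mult_pos_pos) auto
    also have "\<dots> = L / (2 * (1 - e) * (1 - \<gamma>) * \<sigma> * \<beta>)"
      unfolding ee T_def using assms e by (simp add: divide_simps) (simp add: algebra_simps)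
    finally show ?thesis by (simp add: e_def)
  qed
qed

lemma alg1_rate:
  fixes x :: "nat \<Rightarrow> real^'n"
  assumes A1: "assumption1 f gradf L psi" and run: "alg1_run f gradf psi \<beta> \<gamma> \<eta> x H d \<alpha>"
    and px0: "psi (x 0) \<noteq> \<infinity>" and \<sigma>: "0 < \<sigma>" "\<sigma> \<le> M"
    and H: "\<forall>k. loewner_between \<sigma> (H k) M"
  shows "ereal (minGsq gradf psi x k)
              \<le> (Fobj f psi (x 0) - Fstar f psi) *
                 ereal (1 / (\<gamma> * (k + 1)) * cconst \<sigma> M
                        / (2 * (1 - \<eta>) * \<sigma> * Min (\<alpha> ` {..k})))
          \<and> (Fobj f psi (x 0) - Fstar f psi) *
                 ereal (1 / (\<gamma> * (k + 1)) * cconst \<sigma> M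
                        / (2 * (1 - \<eta>) * \<sigma> * Min (\<alpha> ` {..k})))
              \<le> (Fobj f psi (x 0) - Fstar f psi) *
                 ereal (1 / (\<gamma> * (k + 1)) * cconst \<sigma> M / (2 * \<sigma>)
                        * max (1 / (1 - \<eta>)) (L / (2 * (1 - sqrt \<eta>) * (1 - \<gamma>) * \<sigma> * \<beta>)))"
proof -
  have pars: "0 < \<beta>" "0 < \<gamma>" "\<gamma> < 1" "0 \<le> \<eta>" "\<eta> < 1" using run by (auto simp: alg1_run_def)
  define c where "c = \<gamma> * (1 - \<eta>) / (2 * max M 1)"
  define a where "a = Min (\<alpha> ` {..k})"
  have decrease: "\<And>t. psi (x t) \<noteq> \<infinity> \<Longrightarrow>
      Fobj f psi (x (Suc t)) \<le> Fobj f psi (x t) - ereal (\<alpha> t * c * (norm (Gmap gradf psi (x t)))\<^sup>2)"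
    using alg1_sufficient_decrease[OF A1 run _ _ _ H[rule_format]] \<sigma> by (simp add: c_def)
  have "a \<in> \<alpha> ` {..k}" unfolding a_def by (rule Min_in) auto
  then obtain t where "a = \<alpha> t"  by blast
  then have a_pos: "0 < a" and a_ge: "min 1 (\<beta> * (2 * (1 - \<gamma>) * \<sigma> / (L * (1 + sqrt \<eta>)))) \<le> a"
    using alg1_step_size_pos[OF run] alg1_step_size_ge[OF A1 run _ \<sigma>(1) H[rule_format]]
      decrease_keeps_psi_finite[OF A1 px0 decrease] by auto
  have "ereal (minGsq gradf psi x k)
      \<le> (Fobj f psi (x 0) - Fstar f psi) * ereal (1 / (c * (real k + 1) * a))"
    using minGsq_le_of_sufficient_decrease[OF A1 px0 decrease] alg1_step_size_pos[OF run] pars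
    by (simp add: a_def c_def)
  also have "\<dots> \<le> (Fobj f psi (x 0) - Fstar f psi)
      * ereal (1 / (\<gamma> * (k + 1)) * cconst \<sigma> M / (2 * (1 - \<eta>) * \<sigma> * a))"
    using rate_factor_le_cconst[OF \<sigma> pars(2,5) a_pos, of "real k + 1"]
    by (intro ereal_mult_left_mono Fobj_minus_Fstar_nonneg) (simp_all add: c_def add.commute)
  finally have first: "ereal (minGsq gradf psi x k)
      \<le> (Fobj f psi (x 0) - Fstar f psi)
         * ereal (1 / (\<gamma> * (k + 1)) * cconst \<sigma> M / (2 * (1 - \<eta>) * \<sigma> * a))" .
  have "1 / (\<gamma> * (k + 1)) * cconst \<sigma> M / (2 * (1 - \<eta>) * \<sigma> * a)
      = 1 / (\<gamma> * (k + 1)) * cconst \<sigma> M / (2 * \<sigma>) * (1 / ((1 - \<eta>) * a))" by simp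
  also have "\<dots> \<le> 1 / (\<gamma> * (k + 1)) * cconst \<sigma> M / (2 * \<sigma>)
      * max (1 / (1 - \<eta>)) (L / (2 * (1 - sqrt \<eta>) * (1 - \<gamma>) * \<sigma> * \<beta>))"
    using inverse_step_size_le[OF pars(4,5,3,1) \<sigma>(1) assumption1_L_pos[OF A1] a_ge] pars \<sigma>
    by (intro mult_left_mono) (auto simp: cconst_def)
  finally show ?thesis
    using first by (auto simp: a_def intro: ereal_mult_left_mono Fobj_minus_Fstar_nonneg)
qed

section \<open>Algorithm 2\<close>

lemma alg2_sufficient_decrease:
  assumes A1: "assumption1 f gradf L psi" and run: "alg2_run v f gradf psi \<beta> \<gamma> \<eta> x H0 nb D"
    and px: "psi (x k) \<noteq> \<infinity>" and M: "0 < M"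
    and upper: "\<forall>w. w \<bullet> (trialH v \<beta> (H0 k) (nb k) *v w) \<le> M * (w \<bullet> w)"
  shows "Fobj f psi (x (Suc k)) \<le> Fobj f psi (x k)
    - ereal (\<gamma> * (1 - \<eta>) / (2 * max M 1) * (norm (Gmap gradf psi (x k)))\<^sup>2)"
proof -
  obtain p where p: "psi (x k) = ereal p" using assumption1_psi_finite[OF A1 px] .
  define H where "H = trialH v \<beta> (H0 k) (nb k)"
  have pars: "0 < \<gamma>" "\<eta> < 1"
    and inx: "inexact \<eta> gradf psi (x k) H (D k (nb k))"
    and acc: "accept2 f gradf psi \<gamma> (x k) H (D k (nb k))"
    and step: "x (Suc k) = x k + D k (nb k)"
    using run unfolding alg2_run_def H_def by auto
  define n where "n = (norm (Gmap gradf psi (x k)))\<^sup>2"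
  have Qm: "Qm gradf psi (x k) H (D k (nb k)) \<le> ereal (- ((1 - \<eta>) * n / (2 * max M 1)))"
    using inexact_Qm_le_neg_norm_Gmap[OF A1 p inx _ upper[folded H_def] M] pars by (simp add: n_def)
  then have "Qm gradf psi (x k) H (D k (nb k)) \<noteq> \<infinity>" by auto
  then obtain pd where pd: "psi (x k + D k (nb k)) = ereal pd" by (rule Qm_finite_psi_real[OF A1 p])
  then obtain q where q: "Qm gradf psi (x k) H (D k (nb k)) = ereal q"
    using Qm_eq_real[of psi "x k" p, OF p] by blast
  have "\<gamma> * q \<le> \<gamma> * (- ((1 - \<eta>) * n / (2 * max M 1)))"
    using Qm q pars by (intro mult_left_mono) auto
  then show ?thesis
    using acc step p pd q unfolding accept2_def Fobj_def n_def by simp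
qed

lemma alg2_rejected_trial_curvature_lt:
  assumes A1: "assumption1 f gradf L psi" and run: "alg2_run v f gradf psi \<beta> \<gamma> \<eta> x H0 nb D"
    and px: "psi (x k) \<noteq> \<infinity>" and j: "j < nb k"
    and curv: "\<forall>w. c * (w \<bullet> w) \<le> w \<bullet> (trialH v \<beta> (H0 k) j *v w)"
  shows "c < L * (1 + sqrt \<eta>) / (2 - \<gamma> * (1 - sqrt \<eta>))"
proof (rule ccontr)
  assume "\<not> ?thesis"
  moreover obtain p where p: "psi (x k) = ereal p" using assumption1_psi_finite[OF A1 px] .
  moreover have "0 < \<gamma>" "\<gamma> \<le> 1" "0 \<le> \<eta>" "\<eta> < 1"
    and "inexact \<eta> gradf psi (x k) (trialH v \<beta> (H0 k) j) (D k j)"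
    and "\<not> accept2 f gradf psi \<gamma> (x k) (trialH v \<beta> (H0 k) j) (D k j)"
    using run j unfolding alg2_run_def by auto
  ultimately show False using accept2_if_curvature_large[OF A1] curv by (meson not_less)
qed

lemma trialH_variant1_upper:
  fixes x :: "nat \<Rightarrow> real^'n"
  assumes A1: "assumption1 f gradf L psi" and run: "alg2_run 1 f gradf psi \<beta> \<gamma> \<eta> x H0 nb D"
    and px: "psi (x k) \<noteq> \<infinity>" and H0: "loewner_between m0 (H0 k) M0" and m0: "0 < m0" "m0 \<le> M0"
  shows "\<forall>w. w \<bullet> (trialH 1 \<beta> (H0 k) (nb k) *v w) \<le> tildeM1 L \<beta> \<gamma> m0 M0 \<eta> * (w \<bullet> w)"
proof
  fix w :: "real^'n"
  have \<beta>: "0 < \<beta>" using run by (simp add: alg2_run_def)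
  define X where "X = L * (1 + sqrt \<eta>) / (\<beta> * (2 - \<gamma> * (1 - sqrt \<eta>)) * m0)"
  have scale: "1 / \<beta> ^ nb k \<le> max 1 X"
  proof (cases "nb k")
    case (Suc j)
    have "\<forall>v. m0 / \<beta> ^ j * (v \<bullet> v) \<le> v \<bullet> (trialH 1 \<beta> (H0 k) j *v v)"
      using H0 \<beta> by (auto simp: loewner_between_def trialH_def quadratic_form_scaleR divide_right_mono)
    then have "m0 / \<beta> ^ j < L * (1 + sqrt \<eta>) / (2 - \<gamma> * (1 - sqrt \<eta>))"
      using alg2_rejected_trial_curvature_lt[OF A1 run px, of j] Suc by simp
    then have "m0 / \<beta> ^ j / (\<beta> * m0) \<le> L * (1 + sqrt \<eta>) / (2 - \<gamma> * (1 - sqrt \<eta>)) / (\<beta> * m0)"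
      using \<beta> m0 by (intro divide_right_mono) auto
    moreover have "m0 / \<beta> ^ j / (\<beta> * m0) = 1 / \<beta> ^ nb k" using Suc \<beta> m0 by simp
    moreover have "L * (1 + sqrt \<eta>) / (2 - \<gamma> * (1 - sqrt \<eta>)) / (\<beta> * m0) = X"
      by (simp add: X_def ac_simps)
    ultimately show ?thesis by simp
  qed simp
  have "w \<bullet> (trialH 1 \<beta> (H0 k) (nb k) *v w) = 1 / \<beta> ^ nb k * (w \<bullet> (H0 k *v w))"
    by (simp add: trialH_def quadratic_form_scaleR)
  also have "\<dots> \<le> max 1 X * (M0 * (w \<bullet> w))"
    using H0 scale \<beta> m0 by (intro mult_mono) (auto simp: loewner_between_def intro: order_trans[rotated])
  finally show "w \<bullet> (trialH 1 \<beta> (H0 k) (nb k) *v w) \<le> tildeM1 L \<beta> \<gamma> m0 M0 \<eta> * (w \<bullet> w)"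
    by (simp add: tildeM1_def X_def ac_simps)
qed

lemma trialH_variant2_upper:
  fixes x :: "nat \<Rightarrow> real^'n"
  assumes A1: "assumption1 f gradf L psi" and run: "alg2_run 2 f gradf psi \<beta> \<gamma> \<eta> x H0 nb D"
    and px: "psi (x k) \<noteq> \<infinity>" and H0: "loewner_between m0 (H0 k) M0"
  shows "\<forall>w. w \<bullet> (trialH 2 \<beta> (H0 k) (nb k) *v w) \<le> tildeM2 L \<beta> \<gamma> m0 M0 \<eta> * (w \<bullet> w)"
proof
  fix w :: "real^'n"
  have \<beta>: "0 < \<beta>" using run by (simp add: alg2_run_def)
  define Y where "Y = (1 / \<beta>) * (L * (1 + sqrt \<eta>) / (2 - \<gamma> * (1 - sqrt \<eta>)) - m0)"
  have upper: "w \<bullet> (H0 k *v w) \<le> M0 * (w \<bullet> w)" using H0 by (simp add: loewner_between_def)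
  have trial_Suc: "v \<bullet> (trialH 2 \<beta> (H0 k) (Suc j) *v v) = v \<bullet> (H0 k *v v) + 1 / \<beta> ^ j * (v \<bullet> v)"
    for j v by (simp add: trialH_def quadratic_form_add_scaled_identity)
  show "w \<bullet> (trialH 2 \<beta> (H0 k) (nb k) *v w) \<le> tildeM2 L \<beta> \<gamma> m0 M0 \<eta> * (w \<bullet> w)"
  proof (cases "nb k")
    case 0
    then show ?thesis using upper by (simp add: trialH_def tildeM2_def distrib_right add_increasing2)
  next
    case (Suc j)
    have scale: "1 / \<beta> ^ j \<le> max 1 Y"
    proof (cases j)
      case (Suc i)
      have "\<forall>v. (m0 + 1 / \<beta> ^ i) * (v \<bullet> v) \<le> v \<bullet> (trialH 2 \<beta> (H0 k) (Suc i) *v v)"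
        using H0 by (simp add: loewner_between_def trial_Suc distrib_right)
      then have "m0 + 1 / \<beta> ^ i < L * (1 + sqrt \<eta>) / (2 - \<gamma> * (1 - sqrt \<eta>))"
        using alg2_rejected_trial_curvature_lt[OF A1 run px, of "Suc i"] \<open>nb k = Suc j\<close> Suc by simp
      then have "1 / \<beta> * (1 / \<beta> ^ i) \<le> Y"
        unfolding Y_def using \<beta> by (intro mult_left_mono) auto
      then show ?thesis using Suc by simp
    qed simp
    have "1 / \<beta> ^ j * (w \<bullet> w) \<le> max 1 Y * (w \<bullet> w)"
      using scale by (intro mult_right_mono) auto
    then have "w \<bullet> (trialH 2 \<beta> (H0 k) (nb k) *v w) \<le> M0 * (w \<bullet> w) + max 1 Y * (w \<bullet> w)"
      using trial_Suc[where j = j and v = w] upper unfolding Suc by linarith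
    then show ?thesis by (simp add: tildeM2_def Y_def distrib_right)
  qed
qed

lemma alg2_rate:
  fixes x :: "nat \<Rightarrow> real^'n"
  assumes A1: "assumption1 f gradf L psi" and run: "alg2_run v f gradf psi \<beta> \<gamma> \<eta> x H0 nb D"
    and px0: "psi (x 0) \<noteq> \<infinity>" and m0: "0 < m0" "m0 \<le> M"
    and upper: "\<And>k. psi (x k) \<noteq> \<infinity> \<Longrightarrow> \<forall>w. w \<bullet> (trialH v \<beta> (H0 k) (nb k) *v w) \<le> M * (w \<bullet> w)"
  shows "ereal (minGsq gradf psi x k)
    \<le> (Fobj f psi (x 0) - Fstar f psi) * ereal (1 / (\<gamma> * (k + 1)) * cconst m0 M / (2 * (1 - \<eta>) * m0))"
proof -
  have pars: "0 < \<gamma>" "\<eta> < 1" using run by (auto simp: alg2_run_def)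
  define c where "c = \<gamma> * (1 - \<eta>) / (2 * max M 1)"
  have decrease: "\<And>t. psi (x t) \<noteq> \<infinity> \<Longrightarrow>
      Fobj f psi (x (Suc t)) \<le> Fobj f psi (x t) - ereal (1 * c * (norm (Gmap gradf psi (x t)))\<^sup>2)"
    using alg2_sufficient_decrease[OF A1 run _ _ upper] m0 by (simp add: c_def)
  have "ereal (minGsq gradf psi x k)
      \<le> (Fobj f psi (x 0) - Fstar f psi) * ereal (1 / (c * (real k + 1) * 1))"
    using minGsq_le_of_sufficient_decrease[OF A1 px0 decrease] pars
    by (simp add: c_def image_constant_conv)
  also have "\<dots> \<le> (Fobj f psi (x 0) - Fstar f psi)
      * ereal (1 / (\<gamma> * (k + 1)) * cconst m0 M / (2 * (1 - \<eta>) * m0 * 1))"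
    using rate_factor_le_cconst[OF m0 pars, of 1 "real k + 1"]
    by (intro ereal_mult_left_mono Fobj_minus_Fstar_nonneg) (simp_all add: c_def add.commute)
  finally show ?thesis by simp
qed

theorem corollary3:
  fixes f :: "real^'n \<Rightarrow> real" and gradf :: "real^'n \<Rightarrow> real^'n"
    and psi :: "real^'n \<Rightarrow> ereal" and L \<eta> :: real
  assumes A1: "assumption1 f gradf L psi"
    and eta: "0 \<le> \<eta>" "\<eta> < 1"
  shows
   "(\<forall>\<beta> \<gamma> x H d \<alpha> \<sigma> M.
       alg1_run f gradf psi \<beta> \<gamma> \<eta> x H d \<alpha> \<and> psi (x 0) \<noteq> \<infinity> \<and>
       0 < \<sigma> \<and> \<sigma> \<le> M \<and> (\<forall>k. loewner_between \<sigma> (H k) M) \<longrightarrow>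
       (\<forall>k. ereal (minGsq gradf psi x k)
              \<le> (Fobj f psi (x 0) - Fstar f psi) *
                 ereal (1 / (\<gamma> * (k + 1)) * cconst \<sigma> M
                        / (2 * (1 - \<eta>) * \<sigma> * Min (\<alpha> ` {..k})))
          \<and> (Fobj f psi (x 0) - Fstar f psi) *
                 ereal (1 / (\<gamma> * (k + 1)) * cconst \<sigma> M
                        / (2 * (1 - \<eta>) * \<sigma> * Min (\<alpha> ` {..k})))
              \<le> (Fobj f psi (x 0) - Fstar f psi) *
                 ereal (1 / (\<gamma> * (k + 1)) * cconst \<sigma> M / (2 * \<sigma>)
                        * max (1 / (1 - \<eta>)) (L / (2 * (1 - sqrt \<eta>) * (1 - \<gamma>) * \<sigma> * \<beta>)))))
    \<and> (\<forall>\<beta> \<gamma> x H0 nb D m0 M0.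
       alg2_run 1 f gradf psi \<beta> \<gamma> \<eta> x H0 nb D \<and> psi (x 0) \<noteq> \<infinity> \<and>
       0 < m0 \<and> m0 \<le> M0 \<and> (\<forall>k. loewner_between m0 (H0 k) M0) \<longrightarrow>
       (\<forall>k. ereal (minGsq gradf psi x k)
              \<le> (Fobj f psi (x 0) - Fstar f psi) *
                 ereal (1 / (\<gamma> * (k + 1)) * cconst m0 (tildeM1 L \<beta> \<gamma> m0 M0 \<eta>)
                        / (2 * (1 - \<eta>) * m0))))
    \<and> (\<forall>\<beta> \<gamma> x H0 nb D m0 M0.
       alg2_run 2 f gradf psi \<beta> \<gamma> \<eta> x H0 nb D \<and> psi (x 0) \<noteq> \<infinity> \<and>
       0 < m0 \<and> m0 \<le> M0 \<and> (\<forall>k. loewner_between m0 (H0 k) M0) \<longrightarrow>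
       (\<forall>k. ereal (minGsq gradf psi x k)
              \<le> (Fobj f psi (x 0) - Fstar f psi) *
                 ereal (1 / (\<gamma> * (k + 1)) * cconst m0 (tildeM2 L \<beta> \<gamma> m0 M0 \<eta>)
                        / (2 * (1 - \<eta>) * m0))))"
proof -
  have variant1: "ereal (minGsq gradf psi x k) \<le> (Fobj f psi (x 0) - Fstar f psi) *
      ereal (1 / (\<gamma> * (k + 1)) * cconst m0 (tildeM1 L \<beta> \<gamma> m0 M0 \<eta>) / (2 * (1 - \<eta>) * m0))"
    if "alg2_run 1 f gradf psi \<beta> \<gamma> \<eta> x H0 nb D" "psi (x 0) \<noteq> \<infinity>" "0 < m0" "m0 \<le> M0"
      "\<forall>k. loewner_between m0 (H0 k) M0" for \<beta> \<gamma> x H0 nb D m0 M0 k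
  proof (rule alg2_rate[OF A1 that(1,2,3)])
    have "M0 * 1 \<le> tildeM1 L \<beta> \<gamma> m0 M0 \<eta>"
      unfolding tildeM1_def using that(3,4) by (intro mult_left_mono) auto
    then show "m0 \<le> tildeM1 L \<beta> \<gamma> m0 M0 \<eta>" using that(4) by simp
  qed (use trialH_variant1_upper[OF A1 that(1)] that(3-5) in blast)
  have variant2: "ereal (minGsq gradf psi x k) \<le> (Fobj f psi (x 0) - Fstar f psi) *
      ereal (1 / (\<gamma> * (k + 1)) * cconst m0 (tildeM2 L \<beta> \<gamma> m0 M0 \<eta>) / (2 * (1 - \<eta>) * m0))"
    if "alg2_run 2 f gradf psi \<beta> \<gamma> \<eta> x H0 nb D" "psi (x 0) \<noteq> \<infinity>" "0 < m0" "m0 \<le> M0"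
      "\<forall>k. loewner_between m0 (H0 k) M0" for \<beta> \<gamma> x H0 nb D m0 M0 k
  proof (rule alg2_rate[OF A1 that(1,2,3)])
    show "m0 \<le> tildeM2 L \<beta> \<gamma> m0 M0 \<eta>" using that(4) by (simp add: tildeM2_def)
  qed (use trialH_variant2_upper[OF A1 that(1)] that(5) in blast)
  show ?thesis
    using alg1_rate[OF A1] variant1 variant2 by (intro conjI allI impI; elim conjE) blast+
qed

end
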